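(* For every integer $n\geq 1$ there exists a non-empty crowded T$_1$ space $Y_n$ that is hereditarily $(n+1)$-irresolvable and has a crowded dense $n$-partition.
   Context: A space is crowded if it has no isolated points; a subset $S$ of $X$ is crowded in $X$ if it has no isolated points as a subspace. A $k$-partition of $X$ is a family of exactly $k$ non-empty, pairwise disjoint subsets (cells) with union $X$; it is dense if each cell is dense in $X$, and crowded if each cell is crowded. A space is $k$-resolvable if it has $k$ pairwise disjoint non-empty dense subsets, $k$-irresolvable otherwise, and hereditarily $k$-irresolvable if every non-empty subspace is $k$-irresolvable. *)

theory Defs
  imports "HOL-Analysis.Analysis"
begin

definition isolated_pt_in :: "'a topology \<Rightarrow> 'a set \<Rightarrow> 'a \<Rightarrow> bool" where
  "isolated_pt_in X S x \<longleftrightarrow> x \<in> S \<and> (\<exists>U. openin X U \<and> U \<inter> S = {x})"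

definition crowded_in :: "'a topology \<Rightarrow> 'a set \<Rightarrow> bool" where
  "crowded_in X S \<longleftrightarrow> S \<subseteq> topspace X \<and> (\<forall>x\<in>S. \<not> isolated_pt_in X S x)"

definition crowded_space :: "'a topology \<Rightarrow> bool" where
  "crowded_space X \<longleftrightarrow> crowded_in X (topspace X)"

definition dense_in :: "'a topology \<Rightarrow> 'a set \<Rightarrow> bool" where
  "dense_in X D \<longleftrightarrow> D \<subseteq> topspace X \<and> X closure_of D = topspace X"

definition k_partition :: "'a topology \<Rightarrow> nat \<Rightarrow> 'a set set \<Rightarrow> bool" where
  "k_partition X k P \<longleftrightarrow> finite P \<and> card P = k \<and> (\<forall>C\<in>P. C \<noteq> {}) \<and> disjoint P
     \<and> \<Union>P = topspace X"

definition dense_partition :: "'a topology \<Rightarrow> 'a set set \<Rightarrow> bool" where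
  "dense_partition X P \<longleftrightarrow> (\<forall>C\<in>P. dense_in X C)"

definition crowded_partition :: "'a topology \<Rightarrow> 'a set set \<Rightarrow> bool" where
  "crowded_partition X P \<longleftrightarrow> (\<forall>C\<in>P. crowded_in X C)"

definition k_resolvable :: "'a topology \<Rightarrow> nat \<Rightarrow> bool" where
  "k_resolvable X k \<longleftrightarrow> (\<exists>D::'a set set. finite D \<and> card D = k \<and> disjoint D \<and>
     (\<forall>A\<in>D. A \<noteq> {} \<and> dense_in X A))"

definition hereditarily_k_irresolvable :: "'a topology \<Rightarrow> nat \<Rightarrow> bool" where
  "hereditarily_k_irresolvable X k \<longleftrightarrow>
     (\<forall>S. S \<subseteq> topspace X \<and> S \<noteq> {} \<longrightarrow> \<not> k_resolvable (subtopology X S) k)"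

end

(* In a submaximal space, where every dense set is open, finitely many dense subsets of
   any subspace have a dense, hence nonempty, intersection.  Zorn's lemma gives a maximal
   crowded T1 topology on (0,1), and such a topology is submaximal.  Let Y be the union of
   the n intervals (i, i+1), with the topology whose base consists of the preimages under
   frac of open sets of (0,1) minus finite sets.  Each interval is crowded and dense in Y,
   and frac is continuous with fibres of at most n points.  If a nonempty subspace of Y had
   n+1 disjoint dense subsets, their images under frac would be dense in the image subspace,
   so they would share a point x, and the n+1 sets would meet the n-point fibre over x in
   distinct points. *)

theory Submission
  imports Defs
begin

section \<open>Submaximal spaces\<close>

definition submaximal :: "'a topology \<Rightarrow> bool" where
  "submaximal X \<longleftrightarrow> (\<forall>D. dense_in X D \<longrightarrow> openin X D)"

lemma dense_in_iff_Int_open: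
  "dense_in X D \<longleftrightarrow> D \<subseteq> topspace X \<and> (\<forall>U. openin X U \<and> U \<noteq> {} \<longrightarrow> D \<inter> U \<noteq> {})"
  by (simp add: dense_in_def dense_intersects_open)

lemma dense_in_nonempty: "dense_in X D \<Longrightarrow> topspace X \<noteq> {} \<Longrightarrow> D \<noteq> {}"
  unfolding dense_in_def by (metis closure_of_empty)

lemma submaximal_subtopology:
  assumes "submaximal X"
  shows "submaximal (subtopology X T)"
  unfolding submaximal_def
proof (intro allI impI)
  fix D assume D: "dense_in (subtopology X T) D"
  then have "D \<subseteq> topspace X \<inter> T" and T_cl: "topspace X \<inter> T \<subseteq> X closure_of D"
    by (auto simp: dense_in_def closure_of_subtopology Int_absorb1)
  define E where "E = D \<union> (topspace X - X closure_of D)"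
  have "X closure_of E = topspace X"
    using closure_of_subset[of "topspace X - X closure_of D" X] closure_of_subset_topspace[of X D]
      closure_of_subset_topspace[of X E]
    by (auto simp: E_def closure_of_Un)
  then have "openin X E"
    using assms \<open>D \<subseteq> topspace X \<inter> T\<close> by (auto simp: submaximal_def dense_in_def E_def)
  moreover have "D = E \<inter> T"
    using \<open>D \<subseteq> topspace X \<inter> T\<close> T_cl by (auto simp: E_def)
  ultimately show "openin (subtopology X T) D"
    by (auto simp: openin_subtopology)
qed

lemma submaximal_dense_Int:
  assumes "submaximal X" "dense_in X A" "dense_in X B"
  shows "dense_in X (A \<inter> B)"
  unfolding dense_in_iff_Int_open
proof (intro conjI allI impI)
  show "A \<inter> B \<subseteq> topspace X"
    using assms(2) by (auto simp: dense_in_def)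
  fix U assume U: "openin X U \<and> U \<noteq> {}"
  have "openin X (A \<inter> U)"
    using assms(1,2) U by (auto simp: submaximal_def)
  moreover have "A \<inter> U \<noteq> {}"
    using assms(2) U by (auto simp: dense_in_iff_Int_open)
  ultimately show "A \<inter> B \<inter> U \<noteq> {}"
    using assms(3) unfolding dense_in_iff_Int_open by blast
qed

lemma submaximal_dense_Inter:
  assumes "submaximal X" "finite \<A>" "\<And>A. A \<in> \<A> \<Longrightarrow> dense_in X A"
  shows "dense_in X (topspace X \<inter> \<Inter>\<A>)"
  using assms(2,3)
proof (induction \<A> rule: finite_induct)
  case empty
  then show ?case
    by (simp add: dense_in_def)
next
  case (insert A \<A>)
  then have "topspace X \<inter> \<Inter>(insert A \<A>) = A \<inter> (topspace X \<inter> \<Inter>\<A>)"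
    by (auto simp: dense_in_def)
  with insert show ?case
    by (simp add: submaximal_dense_Int assms(1))
qed

lemma dense_in_image:
  assumes f: "continuous_map X Y f" and A: "dense_in X A"
  shows "dense_in (subtopology Y (f ` topspace X)) (f ` A)"
proof -
  have "f ` topspace X \<subseteq> topspace Y"
    using f by (rule continuous_map_image_subset_topspace)
  moreover have "f ` topspace X \<subseteq> Y closure_of (f ` A)"
    using continuous_map_image_closure_subset[OF f, of A] A by (simp add: dense_in_def)
  ultimately show ?thesis
    using A by (auto simp: dense_in_def closure_of_subtopology Int_absorb1 image_mono)
qed

lemma card_le_if_meets_disjoint:
  assumes "disjoint \<D>" "\<And>A. A \<in> \<D> \<Longrightarrow> A \<inter> B \<noteq> {}" "finite B"
  shows "card \<D> \<le> card B"
proof -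
  have "\<forall>A\<in>\<D>. \<exists>x. x \<in> A \<inter> B"
    using assms(2) by blast
  then obtain g where g: "\<And>A. A \<in> \<D> \<Longrightarrow> g A \<in> A \<inter> B"
    by metis
  have "inj_on g \<D>"
    using g assms(1) by (intro inj_onI) (metis IntE disjointD disjoint_iff)
  moreover have "g ` \<D> \<subseteq> B"
    using g by blast
  ultimately show ?thesis
    using assms(3) by (rule card_inj_on_le)
qed

lemma hereditarily_irresolvable_if_finite_fibres:
  assumes f: "continuous_map Y X f" and X: "submaximal X"
    and fibres: "\<And>x. finite {y \<in> topspace Y. f y = x}" "\<And>x. card {y \<in> topspace Y. f y = x} \<le> k"
  shows "hereditarily_k_irresolvable Y (Suc k)"
  unfolding hereditarily_k_irresolvable_def k_resolvable_def
proof (intro allI impI notI)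
  fix S assume S: "S \<subseteq> topspace Y \<and> S \<noteq> {}"
  assume "\<exists>\<D>. finite \<D> \<and> card \<D> = Suc k \<and> disjoint \<D> \<and> (\<forall>A\<in>\<D>. A \<noteq> {} \<and> dense_in (subtopology Y S) A)"
  then obtain \<D> where \<D>: "finite \<D>" "card \<D> = Suc k" "disjoint \<D>"
    and dense: "\<And>A. A \<in> \<D> \<Longrightarrow> dense_in (subtopology Y S) A"
    by blast
  let ?XS = "subtopology X (f ` S)"
  have top_YS: "topspace (subtopology Y S) = S"
    using S by auto
  have top_XS: "topspace ?XS = f ` S"
    using S continuous_map_image_subset_topspace[OF f] by auto
  have "dense_in ?XS (f ` A)" if "A \<in> \<D>" for A
    using dense_in_image[OF continuous_map_from_subtopology[OF f] dense[OF that]] top_YS by simp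
  then have "dense_in ?XS (topspace ?XS \<inter> \<Inter>((`) f ` \<D>))"
    using submaximal_dense_Inter[OF submaximal_subtopology[OF X]] \<D>(1) by blast
  then have "topspace ?XS \<inter> \<Inter>((`) f ` \<D>) \<noteq> {}"
    using dense_in_nonempty S top_XS by blast
  then obtain x where x: "\<And>A. A \<in> \<D> \<Longrightarrow> x \<in> f ` A"
    by blast
  have "A \<inter> {y \<in> topspace Y. f y = x} \<noteq> {}" if "A \<in> \<D>" for A
  proof -
    have "A \<subseteq> topspace Y"
      using dense[OF that] top_YS S by (auto simp: dense_in_def)
    then show ?thesis
      using x[OF that] by blast
  qed
  then have "card \<D> \<le> card {y \<in> topspace Y. f y = x}"
    using card_le_if_meets_disjoint \<D>(3) fibres(1) by blast
  then show False
    using \<D>(2) fibres(2)[of x] by simp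
qed

lemma infinite_openin_if_crowded_t1:
  assumes "t1_space X" "crowded_space X" "openin X U" "U \<noteq> {}"
  shows "infinite U"
proof
  assume "finite U"
  obtain x where "x \<in> U"
    using assms(4) by blast
  have "finite (U - {x})" "U - {x} \<subseteq> topspace X"
    using \<open>finite U\<close> openin_subset[OF assms(3)] by auto
  then have "closedin X (U - {x})"
    using assms(1) by (simp add: t1_space_closedin_finite)
  moreover have "U - (U - {x}) = {x}"
    using \<open>x \<in> U\<close> by blast
  ultimately have "openin X {x}"
    using openin_diff[OF assms(3)] by metis
  then show False
    using assms(2) \<open>x \<in> U\<close> openin_subset[OF assms(3)]
    unfolding crowded_space_def crowded_in_def isolated_pt_in_def by blast
qed

lemma crowded_in_if_infinite_Int_openin:
  assumes "S \<subseteq> topspace X" "\<And>W p. openin X W \<Longrightarrow> p \<in> W \<Longrightarrow> infinite (W \<inter> S)"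
  shows "crowded_in X S"
  unfolding crowded_in_def isolated_pt_in_def
proof (intro conjI ballI notI)
  fix x assume "x \<in> S \<and> (\<exists>U. openin X U \<and> U \<inter> S = {x})"
  then obtain U where "openin X U" "x \<in> U" "U \<inter> S = {x}"
    by blast
  then show False
    using assms(2)[of U x] by simp
qed (rule assms(1))

lemma dense_in_if_infinite_Int_openin:
  assumes "S \<subseteq> topspace X" "\<And>W p. openin X W \<Longrightarrow> p \<in> W \<Longrightarrow> infinite (W \<inter> S)"
  shows "dense_in X S"
  unfolding dense_in_iff_Int_open
proof (intro conjI allI impI)
  fix U assume "openin X U \<and> U \<noteq> {}"
  then have "infinite (U \<inter> S)"
    using assms(2) by blast
  then show "S \<inter> U \<noteq> {}"
    by (metis finite.emptyI inf_commute)
qed (rule assms(1))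

lemma crowded_space_if_dense_crowded_in:
  assumes "dense_in X S" "crowded_in X S"
  shows "crowded_space X"
  unfolding crowded_space_def crowded_in_def isolated_pt_in_def
proof (intro conjI ballI notI subset_refl)
  fix x assume "x \<in> topspace X \<and> (\<exists>U. openin X U \<and> U \<inter> topspace X = {x})"
  then obtain U where U: "openin X U" "U \<inter> topspace X = {x}"
    by blast
  then have "S \<inter> U \<noteq> {}"
    using assms(1) unfolding dense_in_iff_Int_open by blast
  moreover have "S \<subseteq> topspace X"
    using assms(1) by (simp add: dense_in_def)
  ultimately have "U \<inter> S = {x}"
    using U(2) by auto
  then show False
    using U(1) assms(2) unfolding crowded_in_def isolated_pt_in_def by blast
qed

section \<open>Maximal crowded T1 topologies\<close>

text \<open>A maximal member of \<open>crowded_t1_bases C\<close> is itself a topology, and every set meeting all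
  its nonempty members can be adjoined to it; so it is a submaximal crowded T1 topology.\<close>

definition crowded_t1_bases :: "'a set \<Rightarrow> 'a set set set" where
  "crowded_t1_bases C = {\<B>. {U. U \<subseteq> C \<and> finite (C - U)} \<subseteq> \<B> \<and> \<B> \<subseteq> Pow C \<and>
     (\<forall>U\<in>\<B>. \<forall>V\<in>\<B>. U \<inter> V \<in> \<B>) \<and> (\<forall>x. {x} \<notin> \<B>)}"

lemma crowded_t1_basesI:
  assumes "{U. U \<subseteq> C \<and> finite (C - U)} \<subseteq> \<B>" "\<B> \<subseteq> Pow C"
    and "\<And>U V. U \<in> \<B> \<Longrightarrow> V \<in> \<B> \<Longrightarrow> U \<inter> V \<in> \<B>" and "\<And>x. {x} \<notin> \<B>"
  shows "\<B> \<in> crowded_t1_bases C"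
  using assms unfolding crowded_t1_bases_def mem_Collect_eq by blast

lemma crowded_t1_basesD:
  assumes "\<B> \<in> crowded_t1_bases C"
  shows "{U. U \<subseteq> C \<and> finite (C - U)} \<subseteq> \<B>" "\<B> \<subseteq> Pow C"
    and "U \<in> \<B> \<Longrightarrow> V \<in> \<B> \<Longrightarrow> U \<inter> V \<in> \<B>" and "{x} \<notin> \<B>"
  using assms by (auto simp: crowded_t1_bases_def)

lemma crowded_t1_bases_maximal_exists:
  assumes "infinite C"
  shows "\<exists>\<B>\<in>crowded_t1_bases C. \<forall>\<B>'\<in>crowded_t1_bases C. \<B> \<subseteq> \<B>' \<longrightarrow> \<B>' = \<B>"
proof (rule subset_Zorn_nonempty)
  have "\<forall>x. {x} \<notin> {U. U \<subseteq> C \<and> finite (C - U)}"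
    using assms by (metis (no_types, lifting) finite_Diff2 finite.simps mem_Collect_eq)
  then have "{U. U \<subseteq> C \<and> finite (C - U)} \<in> crowded_t1_bases C"
    by (auto simp: crowded_t1_bases_def Diff_Int)
  then show "crowded_t1_bases C \<noteq> {}"
    by blast
next
  fix \<C> assume "\<C> \<noteq> {}" and chain: "subset.chain (crowded_t1_bases C) \<C>"
  have sub: "\<C> \<subseteq> crowded_t1_bases C"
    using chain by (simp add: subset_chain_def)
  have Int: "U \<inter> V \<in> \<Union>\<C>" if UV: "U \<in> \<Union>\<C>" "V \<in> \<Union>\<C>" for U V
  proof -
    obtain \<B>1 \<B>2 where \<B>: "\<B>1 \<in> \<C>" "\<B>2 \<in> \<C>" "U \<in> \<B>1" "V \<in> \<B>2"
      using UV by blast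
    then have "\<B>1 \<subseteq> \<B>2 \<or> \<B>2 \<subseteq> \<B>1"
      using chain by (simp add: subset_chain_def)
    then obtain \<B> where "\<B> \<in> \<C>" "U \<in> \<B>" "V \<in> \<B>"
      using \<B> by blast
    then show ?thesis
      using crowded_t1_basesD(3)[of \<B> C U V] sub by (meson UnionI subsetD)
  qed
  obtain \<B> where "\<B> \<in> \<C>"
    using \<open>\<C> \<noteq> {}\<close> by blast
  then have cofinite: "{U. U \<subseteq> C \<and> finite (C - U)} \<subseteq> \<Union>\<C>"
    using crowded_t1_basesD(1)[of \<B> C] sub by (meson Union_upper subset_trans subsetD)
  have pow: "\<Union>\<C> \<subseteq> Pow C"
    using crowded_t1_basesD(2) sub by (meson Union_least subsetD)
  have singleton: "{x} \<notin> \<Union>\<C>" for x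
    using crowded_t1_basesD(4) sub by (meson UnionE subsetD)
  show "\<Union>\<C> \<in> crowded_t1_bases C"
    using cofinite pow Int singleton by (rule crowded_t1_basesI)
qed

lemma cofinite_in_crowded_t1_bases:
  "\<B> \<in> crowded_t1_bases C \<Longrightarrow> U \<subseteq> C \<Longrightarrow> finite (C - U) \<Longrightarrow> U \<in> \<B>"
  using crowded_t1_basesD(1) by blast

lemma crowded_t1_bases_generated:
  assumes \<B>: "\<B> \<in> crowded_t1_bases C"
  shows "{V. V \<subseteq> C \<and> (\<forall>x\<in>V. \<exists>U\<in>\<B>. x \<in> U \<and> U \<subseteq> V)} \<in> crowded_t1_bases C"
    (is "?\<B>' \<in> _")
proof (rule crowded_t1_basesI)
  have "\<B> \<subseteq> ?\<B>'"
    using crowded_t1_basesD(2)[OF \<B>] by blast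
  with crowded_t1_basesD(1)[OF \<B>] show "{U. U \<subseteq> C \<and> finite (C - U)} \<subseteq> ?\<B>'"
    by (rule subset_trans)
  show "?\<B>' \<subseteq> Pow C"
    by blast
next
  fix V W assume V: "V \<in> ?\<B>'" and W: "W \<in> ?\<B>'"
  have "\<exists>U\<in>\<B>. x \<in> U \<and> U \<subseteq> V \<inter> W" if "x \<in> V \<inter> W" for x
  proof -
    have "\<forall>y\<in>V. \<exists>U\<in>\<B>. y \<in> U \<and> U \<subseteq> V" "\<forall>y\<in>W. \<exists>U\<in>\<B>. y \<in> U \<and> U \<subseteq> W"
      using V W by simp_all
    with that obtain U1 U2 where
      U: "U1 \<in> \<B>" "x \<in> U1" "U1 \<subseteq> V" "U2 \<in> \<B>" "x \<in> U2" "U2 \<subseteq> W"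
      by blast
    show ?thesis
    proof (rule bexI)
      show "U1 \<inter> U2 \<in> \<B>"
        using U(1,4) by (rule crowded_t1_basesD(3)[OF \<B>])
    qed (use U in blast)
  qed
  then show "V \<inter> W \<in> ?\<B>'"
    using V by blast
next
  fix x show "{x} \<notin> ?\<B>'"
    using crowded_t1_basesD(4)[OF \<B>] by (blast dest: subset_singletonD)
qed

lemma maximal_crowded_t1_base_istopology:
  assumes \<B>: "\<B> \<in> crowded_t1_bases C"
    and max: "\<And>\<B>'. \<B>' \<in> crowded_t1_bases C \<Longrightarrow> \<B> \<subseteq> \<B>' \<Longrightarrow> \<B>' = \<B>"
  shows "istopology (\<lambda>U. U \<in> \<B>)"
proof -
  define \<B>' where "\<B>' = {V. V \<subseteq> C \<and> (\<forall>x\<in>V. \<exists>U\<in>\<B>. x \<in> U \<and> U \<subseteq> V)}"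
  have "\<B>' \<in> crowded_t1_bases C"
    unfolding \<B>'_def using \<B> by (rule crowded_t1_bases_generated)
  moreover have "\<B> \<subseteq> \<B>'"
    unfolding \<B>'_def using crowded_t1_basesD(2)[OF \<B>] by blast
  ultimately have "\<B>' = \<B>"
    by (rule max)
  moreover have "\<Union>\<K> \<in> \<B>'" if "\<K> \<subseteq> \<B>" for \<K>
    unfolding \<B>'_def using that crowded_t1_basesD(2)[OF \<B>] by blast
  ultimately show ?thesis
    unfolding istopology_def using crowded_t1_basesD(3)[OF \<B>] by blast
qed

lemma crowded_t1_bases_adjoin_traces:
  assumes \<B>: "\<B> \<in> crowded_t1_bases C"
    and D: "D \<subseteq> C" "\<And>U. U \<in> \<B> \<Longrightarrow> U \<noteq> {} \<Longrightarrow> U \<inter> D \<noteq> {}"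
  shows "\<B> \<union> (\<lambda>U. U \<inter> D) ` \<B> \<in> crowded_t1_bases C"
    (is "?\<B>' \<in> _")
proof (rule crowded_t1_basesI)
  show "{U. U \<subseteq> C \<and> finite (C - U)} \<subseteq> ?\<B>'"
    using crowded_t1_basesD(1)[OF \<B>] by auto
  show "?\<B>' \<subseteq> Pow C"
    using crowded_t1_basesD(2)[OF \<B>] by auto
next
  have \<B>'_iff: "V \<in> ?\<B>' \<longleftrightarrow> (\<exists>U\<in>\<B>. V = U \<or> V = U \<inter> D)" for V
    by blast
  fix V W assume "V \<in> ?\<B>'" "W \<in> ?\<B>'"
  then obtain V' W' where V'W': "V' \<in> \<B>" "W' \<in> \<B>"
    and "V = V' \<or> V = V' \<inter> D" "W = W' \<or> W = W' \<inter> D"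
    unfolding \<B>'_iff by blast
  then have "V \<inter> W = V' \<inter> W' \<or> V \<inter> W = V' \<inter> W' \<inter> D"
    by auto
  moreover have "V' \<inter> W' \<in> \<B>"
    using V'W' by (rule crowded_t1_basesD(3)[OF \<B>])
  ultimately show "V \<inter> W \<in> ?\<B>'"
    unfolding \<B>'_iff by blast
next
  fix x show "{x} \<notin> ?\<B>'"
  proof
    assume "{x} \<in> ?\<B>'"
    then obtain U where U: "U \<in> \<B>" "{x} = U \<inter> D"
      using crowded_t1_basesD(4)[OF \<B>] by blast
    have "U - {x} = U \<inter> (C - {x})"
      using U(1) crowded_t1_basesD(2)[OF \<B>] by auto
    moreover have "C - {x} \<in> \<B>"
      by (rule cofinite_in_crowded_t1_bases[OF \<B>]) (auto simp: Diff_Diff_Int)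
    ultimately have "U - {x} \<in> \<B>"
      using U(1) crowded_t1_basesD(3)[OF \<B>] by simp
    moreover have "U \<noteq> {x}"
      using U(1) crowded_t1_basesD(4)[OF \<B>] by blast
    ultimately show False
      using D(2)[of "U - {x}"] U by blast
  qed
qed

lemma maximal_crowded_t1_base_dense:
  assumes \<B>: "\<B> \<in> crowded_t1_bases C"
    and max: "\<And>\<B>'. \<B>' \<in> crowded_t1_bases C \<Longrightarrow> \<B> \<subseteq> \<B>' \<Longrightarrow> \<B>' = \<B>"
    and D: "D \<subseteq> C" "\<And>U. U \<in> \<B> \<Longrightarrow> U \<noteq> {} \<Longrightarrow> U \<inter> D \<noteq> {}"
  shows "D \<in> \<B>"
proof -
  have "\<B> \<union> (\<lambda>U. U \<inter> D) ` \<B> = \<B>"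
    using crowded_t1_bases_adjoin_traces[OF \<B> D] Un_upper1 by (rule max)
  moreover have "C \<in> \<B>"
    by (rule cofinite_in_crowded_t1_bases[OF \<B>]) auto
  ultimately show ?thesis
    using D(1) by (metis Int_absorb1 UnCI image_eqI)
qed

lemma submaximal_crowded_t1_topology_exists:
  assumes "infinite C"
  shows "\<exists>X. topspace X = C \<and> t1_space X \<and> crowded_space X \<and> submaximal X"
proof -
  obtain \<B> where \<B>: "\<B> \<in> crowded_t1_bases C"
    and max: "\<And>\<B>'. \<B>' \<in> crowded_t1_bases C \<Longrightarrow> \<B> \<subseteq> \<B>' \<Longrightarrow> \<B>' = \<B>"
    using crowded_t1_bases_maximal_exists[OF assms] by blast
  have cofinite: "C - F \<in> \<B>" if "finite F" for F
    by (rule cofinite_in_crowded_t1_bases[OF \<B>]) (use that in \<open>auto simp: Diff_Diff_Int\<close>)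
  define X where "X = topology (\<lambda>U. U \<in> \<B>)"
  have openX: "openin X U \<longleftrightarrow> U \<in> \<B>" for U
    using maximal_crowded_t1_base_istopology[OF \<B> max] by (simp add: X_def)
  have "topspace X = \<Union>\<B>"
    by (simp add: topspace_def openX)
  also have "\<dots> = C"
    using cofinite[of "{}"] crowded_t1_basesD(2)[OF \<B>] by blast
  finally have topX: "topspace X = C" .
  have "t1_space X"
    unfolding t1_space_def topX openX
  proof (intro ballI impI)
    fix x y assume "x \<in> C" "y \<in> C" "x \<noteq> y"
    then show "\<exists>U. U \<in> \<B> \<and> x \<in> U \<and> y \<notin> U"
      using cofinite[of "{y}"] by blast
  qed
  moreover have "crowded_space X"
    unfolding crowded_space_def crowded_in_def isolated_pt_in_def topX openX
  proof (intro conjI ballI notI subset_refl)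
    fix x assume "x \<in> C" "x \<in> C \<and> (\<exists>U. U \<in> \<B> \<and> U \<inter> C = {x})"
    then obtain U where "U \<in> \<B>" "U \<inter> C = {x}"
      by blast
    moreover have "U \<subseteq> C"
      using \<open>U \<in> \<B>\<close> crowded_t1_basesD(2)[OF \<B>] by blast
    ultimately show False
      using crowded_t1_basesD(4)[OF \<B>, of x] by (simp add: Int_absorb2)
  qed
  moreover have "submaximal X"
    unfolding submaximal_def dense_in_iff_Int_open topX openX
  proof (intro allI impI)
    fix D assume "D \<subseteq> C \<and> (\<forall>U. U \<in> \<B> \<and> U \<noteq> {} \<longrightarrow> D \<inter> U \<noteq> {})"
    then show "D \<in> \<B>"
      using maximal_crowded_t1_base_dense[OF \<B> max, of D] by blast
  qed
  ultimately show ?thesis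
    using topX by blast
qed

section \<open>Pullback topologies refined by the cofinite topology\<close>

definition cofinite_pullback_topology :: "'a set \<Rightarrow> ('a \<Rightarrow> 'b) \<Rightarrow> 'b topology \<Rightarrow> 'a topology" where
  "cofinite_pullback_topology K f X = topology (arbitrary union_of
     (\<lambda>V. \<exists>U F. openin X U \<and> finite F \<and> V = {q \<in> K. f q \<in> U} - F))"

lemma openin_cofinite_pullback_topology:
  "openin (cofinite_pullback_topology K f X) =
     arbitrary union_of (\<lambda>V. \<exists>U F. openin X U \<and> finite F \<and> V = {q \<in> K. f q \<in> U} - F)"
  unfolding cofinite_pullback_topology_def
proof (intro topology_inverse' istopology_base)
  fix S T assume "\<exists>U F. openin X U \<and> finite F \<and> S = {q \<in> K. f q \<in> U} - F"
    and "\<exists>U F. openin X U \<and> finite F \<and> T = {q \<in> K. f q \<in> U} - F"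
  then obtain U1 F1 U2 F2 where "openin X U1" "finite F1" "S = {q \<in> K. f q \<in> U1} - F1"
    and "openin X U2" "finite F2" "T = {q \<in> K. f q \<in> U2} - F2"
    by (elim exE conjE)
  then show "\<exists>U F. openin X U \<and> finite F \<and> S \<inter> T = {q \<in> K. f q \<in> U} - F"
    by (intro exI[of _ "U1 \<inter> U2"] exI[of _ "F1 \<union> F2"]) auto
qed

lemma openin_cofinite_pullback_topology_basic:
  assumes "openin X U" "finite F"
  shows "openin (cofinite_pullback_topology K f X) ({q \<in> K. f q \<in> U} - F)"
  unfolding openin_cofinite_pullback_topology
  using assms by (intro arbitrary_union_of_inc exI[of _ U] exI[of _ F]) simp

lemma openin_cofinite_pullback_topology_nbhd:
  assumes "openin (cofinite_pullback_topology K f X) W" "p \<in> W"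
  obtains U F where "openin X U" "finite F" "p \<in> {q \<in> K. f q \<in> U} - F" "{q \<in> K. f q \<in> U} - F \<subseteq> W"
proof -
  have "\<forall>W p. openin (cofinite_pullback_topology K f X) W \<and> p \<in> W \<longrightarrow>
      (\<exists>V. (\<exists>U F. openin X U \<and> finite F \<and> V = {q \<in> K. f q \<in> U} - F) \<and> p \<in> V \<and> V \<subseteq> W)"
    using openin_topology_base_unique[THEN iffD1, OF openin_cofinite_pullback_topology]
    by (rule conjunct2)
  then obtain V where "\<exists>U F. openin X U \<and> finite F \<and> V = {q \<in> K. f q \<in> U} - F" "p \<in> V" "V \<subseteq> W"
    using assms by (elim allE impE exE conjE) auto
  then show thesis
    using that by (elim exE conjE) simp
qed

lemma topspace_cofinite_pullback_topology:
  assumes "f ` K \<subseteq> topspace X"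
  shows "topspace (cofinite_pullback_topology K f X) = K"
proof
  show "topspace (cofinite_pullback_topology K f X) \<subseteq> K"
  proof
    fix p assume "p \<in> topspace (cofinite_pullback_topology K f X)"
    then show "p \<in> K"
      by (elim openin_cofinite_pullback_topology_nbhd[OF openin_topspace]) simp
  qed
  have "openin (cofinite_pullback_topology K f X) ({q \<in> K. f q \<in> topspace X} - {})"
    by (rule openin_cofinite_pullback_topology_basic) auto
  moreover have "{q \<in> K. f q \<in> topspace X} - {} = K"
    using assms by auto
  ultimately show "K \<subseteq> topspace (cofinite_pullback_topology K f X)"
    by (metis openin_subset)
qed

lemma t1_space_cofinite_pullback_topology:
  assumes "f ` K \<subseteq> topspace X"
  shows "t1_space (cofinite_pullback_topology K f X)"
  unfolding t1_space_def topspace_cofinite_pullback_topology[OF assms]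
proof (intro ballI impI)
  fix x y assume "x \<in> K" "y \<in> K" "x \<noteq> y"
  then show "\<exists>U. openin (cofinite_pullback_topology K f X) U \<and> x \<in> U \<and> y \<notin> U"
    using assms openin_cofinite_pullback_topology_basic[of X "topspace X" "{y}" K f]
    by (intro exI[of _ "{q \<in> K. f q \<in> topspace X} - {y}"]) auto
qed

lemma continuous_map_cofinite_pullback_topology:
  assumes "f ` K \<subseteq> topspace X"
  shows "continuous_map (cofinite_pullback_topology K f X) X f"
  unfolding continuous_map topspace_cofinite_pullback_topology[OF assms]
  using assms openin_cofinite_pullback_topology_basic[of X _ "{}" K f] by simp

lemma infinite_Int_cofinite_pullback_topology:
  assumes X: "\<And>U. openin X U \<Longrightarrow> U \<noteq> {} \<Longrightarrow> infinite U"
    and c: "c \<subseteq> K" "bij_betw f c (topspace X)"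
    and W: "openin (cofinite_pullback_topology K f X) W" "p \<in> W"
  shows "infinite (W \<inter> c)"
proof
  obtain U F where UF: "openin X U" "finite F" "f p \<in> U" "{q \<in> K. f q \<in> U} - F \<subseteq> W"
    using W by (auto elim: openin_cofinite_pullback_topology_nbhd)
  have "f ` {q \<in> c. f q \<in> U} = U"
    using c(2) openin_subset[OF UF(1)] by (auto simp: bij_betw_def)
  then have "infinite {q \<in> c. f q \<in> U}"
    using X[OF UF(1)] UF(3) by (metis empty_iff finite_imageI)
  moreover assume "finite (W \<inter> c)"
  then have "finite ({q \<in> c. f q \<in> U} - F)"
    using UF(4) c(1) by (rule_tac finite_subset[of _ "W \<inter> c"]) auto
  ultimately show False
    using UF(2) by simp
qed

lemma crowded_dense_in_cofinite_pullback_topology: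
  assumes X: "t1_space X" "crowded_space X" and "f ` K \<subseteq> topspace X"
    and c: "c \<subseteq> K" "bij_betw f c (topspace X)"
  shows "crowded_in (cofinite_pullback_topology K f X) c"
    and "dense_in (cofinite_pullback_topology K f X) c"
proof -
  have "c \<subseteq> topspace (cofinite_pullback_topology K f X)"
    using c(1) topspace_cofinite_pullback_topology[OF assms(3)] by simp
  moreover have "infinite (W \<inter> c)"
    if "openin (cofinite_pullback_topology K f X) W" "p \<in> W" for W p
    using infinite_openin_if_crowded_t1[OF X] c that by (rule infinite_Int_cofinite_pullback_topology)
  ultimately show "crowded_in (cofinite_pullback_topology K f X) c"
    and "dense_in (cofinite_pullback_topology K f X) c"
    by (simp_all add: crowded_in_if_infinite_Int_openin dense_in_if_infinite_Int_openin)
qed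

lemma frac_in_unit_interval:
  assumes "y \<in> {real i<..<real i + 1}"
  shows "frac y = y - real i"
proof -
  have "\<lfloor>y\<rfloor> = int i"
    using assms by (simp add: floor_eq_iff)
  then show ?thesis
    by (simp add: frac_def)
qed

lemma bij_betw_frac_unit_interval: "bij_betw frac {real i<..<real i + 1} {0<..<1}"
proof (rule bij_betw_byWitness[where f' = "\<lambda>x. x + real i"])
  show "\<forall>x\<in>{0<..<1}. frac (x + real i) = x"
    using frac_in_unit_interval[of "_ + real i" i] by simp
qed (auto simp: frac_in_unit_interval)

lemma disjoint_unit_intervals:
  "i \<noteq> j \<Longrightarrow> {real i<..<real i + 1} \<inter> {real j<..<real j + 1} = {}"
  by (cases i j rule: linorder_cases) auto

lemma frac_fibre_unit_intervals:
  shows "finite {y \<in> (\<Union>i<n. {real i<..<real i + 1}). frac y = x}"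
    and "card {y \<in> (\<Union>i<n. {real i<..<real i + 1}). frac y = x} \<le> n"
proof -
  have fibre: "{y \<in> (\<Union>i<n. {real i<..<real i + 1}). frac y = x} \<subseteq> (\<lambda>i. x + real i) ` {..<n}"
    by (auto simp: frac_in_unit_interval)
  then show "finite {y \<in> (\<Union>i<n. {real i<..<real i + 1}). frac y = x}"
    by (rule finite_subset) simp
  have "card {y \<in> (\<Union>i<n. {real i<..<real i + 1}). frac y = x} \<le> card ((\<lambda>i. x + real i) ` {..<n})"
    using fibre by (rule card_mono[rotated]) simp
  also have "\<dots> \<le> n"
    using card_image_le[of "{..<n}" "\<lambda>i. x + real i"] by simp
  finally show "card {y \<in> (\<Union>i<n. {real i<..<real i + 1}). frac y = x} \<le> n" .
qed

lemma k_partition_unit_intervals: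
  assumes "topspace Y = (\<Union>i<n. {real i<..<real i + 1})"
  shows "k_partition Y n ((\<lambda>i. {real i<..<real i + 1}) ` {..<n})"
proof -
  have "inj_on (\<lambda>i. {real i<..<real i + 1}) {..<n}"
  proof (rule inj_onI, rule ccontr)
    fix i j assume "{real i<..<real i + 1} = {real j<..<real j + 1}" "i \<noteq> j"
    then have "{real i<..<real i + 1} = {}"
      using disjoint_unit_intervals[of i j] by simp
    moreover have "real i + 1/2 \<in> {real i<..<real i + 1}"
      by simp
    ultimately show False
      by blast
  qed
  then have "card ((\<lambda>i. {real i<..<real i + 1}) ` {..<n}) = n"
    by (simp add: card_image)
  moreover have "disjoint ((\<lambda>i. {real i<..<real i + 1}) ` {..<n})"
    unfolding pairwise_def disjnt_def by (metis (no_types, lifting) imageE disjoint_unit_intervals)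
  ultimately show ?thesis
    unfolding k_partition_def assms by simp
qed

theorem theorem4:
  fixes n :: nat
  assumes "n \<ge> 1"
  shows "\<exists>Y :: real topology. topspace Y \<noteq> {} \<and> crowded_space Y \<and> t1_space Y \<and>
           hereditarily_k_irresolvable Y (n + 1) \<and>
           (\<exists>P. k_partition Y n P \<and> crowded_partition Y P \<and> dense_partition Y P)"
proof -
  have "infinite {0<..<1::real}"
    by (simp add: infinite_Ioo)
  then obtain X :: "real topology"
    where X: "topspace X = {0<..<1}" "t1_space X" "crowded_space X" "submaximal X"
    using submaximal_crowded_t1_topology_exists by blast
  define K where "K = (\<Union>i<n. {real i<..<real i + 1})"
  define Y where "Y = cofinite_pullback_topology K frac X"
  have frac_K: "frac ` K \<subseteq> topspace X"
    using bij_betw_frac_unit_interval unfolding K_def X(1) bij_betw_def by blast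
  have topY: "topspace Y = K"
    unfolding Y_def using frac_K by (rule topspace_cofinite_pullback_topology)
  have cells: "crowded_in Y {real i<..<real i + 1}" "dense_in Y {real i<..<real i + 1}" if "i < n" for i
    using crowded_dense_in_cofinite_pullback_topology[OF X(2,3) frac_K, of "{real i<..<real i + 1}"]
      bij_betw_frac_unit_interval[of i] that
    by (auto simp: Y_def K_def X(1))
  show ?thesis
  proof (intro exI[of _ Y] conjI exI[of _ "(\<lambda>i. {real i<..<real i + 1}) ` {..<n}"])
    show "topspace Y \<noteq> {}" "crowded_space Y"
      using cells[of 0] assms crowded_space_if_dense_crowded_in by (auto simp: dense_in_def)
    show "t1_space Y"
      unfolding Y_def using frac_K by (rule t1_space_cofinite_pullback_topology)
    have "hereditarily_k_irresolvable Y (Suc n)"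
      using continuous_map_cofinite_pullback_topology[OF frac_K, folded Y_def] X(4)
        frac_fibre_unit_intervals[of n, folded K_def, folded topY]
      by (rule hereditarily_irresolvable_if_finite_fibres)
    then show "hereditarily_k_irresolvable Y (n + 1)"
      by simp
    show "k_partition Y n ((\<lambda>i. {real i<..<real i + 1}) ` {..<n})"
      using topY unfolding K_def by (rule k_partition_unit_intervals)
    show "crowded_partition Y ((\<lambda>i. {real i<..<real i + 1}) ` {..<n})"
      "dense_partition Y ((\<lambda>i. {real i<..<real i + 1}) ` {..<n})"
      using cells by (auto simp: crowded_partition_def dense_partition_def)
  qed
qed

end
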